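(* The calculus $\lambda_{\parallel}$ terminates: if $\Gamma\vdash M:\alpha$ in $\lambda_{\parallel}$, then there is no infinite reduction sequence $M\to M_1\to M_2\to\cdots$.
   Context: Terms are considered up to $\alpha$-renaming; $[V/x]M$ is capture-avoiding substitution. The parallel call-by-value $\lambda$-calculus $\lambda_{\parallel}$: values $V::=*\mid\lambda x.M\mid x$; terms $M::=V\mid MM\mid (M\mid M)$; evaluation contexts $E::=[\,]\mid E[[\,]M]\mid E[V[\,]]\mid E[[\,]\mid M]\mid E[M\mid[\,]]$; value types $A::=1\mid A\to\alpha$; types $\alpha::=A\mid b$ ($b$ a distinguished behavior type). Reduction: $E[(\lambda x.M)V]\to E[[V/x]M]$. Typing ($\Gamma$ a finite map from variables to value types): $\Gamma\vdash x:A$ if $x:A\in\Gamma$; $\Gamma\vdash *:1$; $\Gamma\vdash\lambda x.M:A\to\alpha$ if $\Gamma,x:A\vdash M:\alpha$; $\Gamma\vdash MN:\alpha$ if $\Gamma\vdash M:A\to\alpha$ and $\Gamma\vdash N:A$; $\Gamma\vdash (M_1\mid M_2):b$ if $\Gamma\vdash M_i:b$ for $i=1,2$. *)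

theory Defs
  imports Main
begin

text \<open>Terms of the parallel call-by-value lambda calculus, with de Bruijn indices
  (so terms are identified up to alpha-renaming by construction).\<close>

datatype trm = Var nat | Star | Lam trm | App trm trm | Par trm trm

fun is_val :: "trm \<Rightarrow> bool" where
  "is_val (Var i) = True"
| "is_val Star = True"
| "is_val (Lam M) = True"
| "is_val (App M N) = False"
| "is_val (Par M N) = False"

fun lift :: "nat \<Rightarrow> trm \<Rightarrow> trm" where
  "lift k (Var i) = (if i < k then Var i else Var (Suc i))"
| "lift k Star = Star"
| "lift k (Lam M) = Lam (lift (Suc k) M)"
| "lift k (App M N) = App (lift k M) (lift k N)"
| "lift k (Par M N) = Par (lift k M) (lift k N)"

text \<open>Capture-avoiding substitution \<open>subst M k s\<close> = [s/k]M (removing index k).\<close>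
fun subst :: "trm \<Rightarrow> nat \<Rightarrow> trm \<Rightarrow> trm" where
  "subst (Var i) k s = (if k < i then Var (i - 1) else if i = k then s else Var i)"
| "subst Star k s = Star"
| "subst (Lam M) k s = Lam (subst M (Suc k) (lift 0 s))"
| "subst (App M N) k s = App (subst M k s) (subst N k s)"
| "subst (Par M N) k s = Par (subst M k s) (subst N k s)"

text \<open>One-step reduction E[(\<lambda>x.M)V] \<rightarrow> E[[V/x]M], with the evaluation contexts
  E ::= [] | E[[] M] | E[V []] | E[[] | M] | E[M | []].\<close>
inductive red :: "trm \<Rightarrow> trm \<Rightarrow> bool" where
  beta: "is_val V \<Longrightarrow> red (App (Lam M) V) (subst M 0 V)"
| appL: "red M M' \<Longrightarrow> red (App M N) (App M' N)"
| appR: "is_val V \<Longrightarrow> red N N' \<Longrightarrow> red (App V N) (App V N')"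
| parL: "red M M' \<Longrightarrow> red (Par M N) (Par M' N)"
| parR: "red N N' \<Longrightarrow> red (Par M N) (Par M N')"

datatype vty = One | Arr vty ty
     and ty = VT vty | Beh

inductive typing :: "vty list \<Rightarrow> trm \<Rightarrow> ty \<Rightarrow> bool" where
  t_var: "i < length \<Gamma> \<Longrightarrow> \<Gamma> ! i = A \<Longrightarrow> typing \<Gamma> (Var i) (VT A)"
| t_star: "typing \<Gamma> Star (VT One)"
| t_lam: "typing (A # \<Gamma>) M \<alpha> \<Longrightarrow> typing \<Gamma> (Lam M) (VT (Arr A \<alpha>))"
| t_app: "typing \<Gamma> M (VT (Arr A \<alpha>)) \<Longrightarrow> typing \<Gamma> N (VT A) \<Longrightarrow> typing \<Gamma> (App M N) \<alpha>"
| t_par: "typing \<Gamma> M Beh \<Longrightarrow> typing \<Gamma> N Beh \<Longrightarrow> typing \<Gamma> (Par M N) Beh"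

end

theory Submission
  imports Defs
begin

text \<open>Tait's reducibility method.
  Reducibility is closed under reduction and under backward reduction of non-values,
  which gives that a well-typed term with reducible values substituted for its variables
  is reducible. Variables are reducible values (an application of a variable to a value
  is stuck), so every well-typed term is strongly normalising. Parallel composition needs
  no reducibility condition: its reductions interleave those of its two components.\<close>

inductive SN :: "trm \<Rightarrow> bool" where
  SNI: "(\<And>N. red M N \<Longrightarrow> SN N) \<Longrightarrow> SN M"

lemma SN_no_infinite_red:
  assumes "SN M"
  shows "\<nexists>f. f 0 = M \<and> (\<forall>n. red (f n) (f (Suc n)))"
  using assms
proof (induction rule: SN.induct)
  case (SNI M)
  show ?case
  proof
    assume "\<exists>f. f 0 = M \<and> (\<forall>n. red (f n) (f (Suc n)))"
    then obtain f where f0: "f 0 = M" and chain: "\<forall>n. red (f n) (f (Suc n))" by blast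
    have "red M (f (Suc 0))" using chain f0 by metis
    moreover have "\<exists>g. g 0 = f (Suc 0) \<and> (\<forall>n. red (g n) (g (Suc n)))"
      using chain by (intro exI[of _ "\<lambda>n. f (Suc n)"]) simp
    ultimately show False using SNI.IH by blast
  qed
qed

lemma SN_red: "SN M \<Longrightarrow> red M N \<Longrightarrow> SN N"
  by (erule SN.cases) auto

lemma val_irreducible: "red V N \<Longrightarrow> \<not> is_val V"
  by (induction rule: red.induct) auto

lemma SN_val: "is_val V \<Longrightarrow> SN V"
  by (rule SNI) (auto dest: val_irreducible)

lemma val_rtranclp_red: "red\<^sup>*\<^sup>* V N \<Longrightarrow> is_val V \<Longrightarrow> N = V"
  by (erule converse_rtranclpE) (auto dest: val_irreducible)

lemma SN_Par: "SN M \<Longrightarrow> SN N \<Longrightarrow> SN (Par M N)"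
proof (induction M arbitrary: N rule: SN.induct)
  case (SNI M)
  note IH_left = SNI.IH
  from \<open>SN N\<close> show ?case
  proof (induction N rule: SN.induct)
    case (SNI N)
    have "SN N" by (rule SN.SNI) (fact SNI.hyps)
    show ?case
    proof (rule SN.SNI)
      fix X assume "red (Par M N) X"
      then show "SN X"
        by (cases rule: red.cases) (use IH_left SNI.IH \<open>SN N\<close> in \<open>blast+\<close>)
    qed
  qed
qed

fun reducible_val :: "vty \<Rightarrow> trm \<Rightarrow> bool" and reducible :: "ty \<Rightarrow> trm \<Rightarrow> bool" where
  "reducible_val One V \<longleftrightarrow> True"
| "reducible_val (Arr A \<alpha>) V \<longleftrightarrow>
     (\<forall>W. is_val W \<longrightarrow> reducible_val A W \<longrightarrow> reducible \<alpha> (App V W))"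
| "reducible (VT A) M \<longleftrightarrow> SN M \<and> (\<forall>N. red\<^sup>*\<^sup>* M N \<longrightarrow> is_val N \<longrightarrow> reducible_val A N)"
| "reducible Beh M \<longleftrightarrow> SN M"

lemma reducible_SN: "reducible \<alpha> M \<Longrightarrow> SN M"
  by (cases \<alpha>) auto

lemma reducible_red: "reducible \<alpha> M \<Longrightarrow> red M M' \<Longrightarrow> reducible \<alpha> M'"
  by (cases \<alpha>) (auto intro: SN_red converse_rtranclp_into_rtranclp)

lemma reducible_nonval:
  assumes "\<not> is_val M" and "\<And>M'. red M M' \<Longrightarrow> reducible \<alpha> M'"
  shows "reducible \<alpha> M"
proof -
  have "SN M" by (rule SNI) (use assms reducible_SN in blast)
  show ?thesis
  proof (cases \<alpha>)
    case (VT A)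
    have "reducible_val A N" if "red\<^sup>*\<^sup>* M N" "is_val N" for N
      using that(1)
    proof (cases rule: converse_rtranclpE)
      case base
      then show ?thesis using assms(1) that(2) by simp
    next
      case (step M')
      then show ?thesis using assms(2)[of M'] VT that(2) by auto
    qed
    with \<open>SN M\<close> VT show ?thesis by simp
  next
    case Beh
    with \<open>SN M\<close> show ?thesis by simp
  qed
qed

lemma reducible_val_iff: "is_val V \<Longrightarrow> reducible (VT A) V \<longleftrightarrow> reducible_val A V"
  using SN_val val_rtranclp_red by auto

lemma red_App_Var_val: "red (App (Var i) W) X \<Longrightarrow> \<not> is_val W"
  by (erule red.cases) (auto dest: val_irreducible)

lemma reducible_val_Var: "reducible_val A (Var i)"
proof (cases A)
  case One
  then show ?thesis by simp
next
  case (Arr B \<alpha>)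
  have "reducible \<alpha> (App (Var i) W)" if "is_val W" for W
    by (rule reducible_nonval) (use that red_App_Var_val in auto)
  with Arr show ?thesis by simp
qed

text \<open>Nested induction on the strong normalisation of function and argument: a
  \<open>\<beta>\<close>-step is covered by reducibility of the function at the arrow type, since function
  and argument are then values.\<close>

lemma reducible_App:
  assumes "reducible (VT (Arr A \<alpha>)) M" and "reducible (VT A) N"
  shows "reducible \<alpha> (App M N)"
proof -
  have "SN M" "SN N" using assms by (auto intro: reducible_SN)
  then show ?thesis using assms
  proof (induction M arbitrary: N rule: SN.induct)
    case (SNI M)
    note IH_fun = SNI.IH
    from \<open>SN N\<close> \<open>reducible (VT (Arr A \<alpha>)) M\<close> \<open>reducible (VT A) N\<close> show ?case
    proof (induction N rule: SN.induct)
      case (SNI N)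
      show ?case
      proof (rule reducible_nonval)
        fix X assume step: "red (App M N) X"
        then show "reducible \<alpha> X"
        proof (cases rule: red.cases)
          case (beta b)
          then have "reducible_val (Arr A \<alpha>) M" "reducible_val A N"
            using SNI.prems reducible_val_iff by auto
          with beta have "reducible \<alpha> (App M N)" by simp
          from this step show ?thesis by (rule reducible_red)
        next
          case (appL M')
          moreover have "SN N" by (rule SN.SNI) (fact SNI.hyps)
          ultimately show ?thesis using SNI.prems IH_fun reducible_red by blast
        next
          case (appR N')
          then show ?thesis using SNI.prems SNI.IH reducible_red by blast
        qed
      qed simp
    qed
  qed
qed

fun psubst_up :: "(nat \<Rightarrow> trm) \<Rightarrow> nat \<Rightarrow> trm" where
  "psubst_up \<sigma> 0 = Var 0"
| "psubst_up \<sigma> (Suc j) = lift 0 (\<sigma> j)"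

fun scons :: "trm \<Rightarrow> (nat \<Rightarrow> trm) \<Rightarrow> nat \<Rightarrow> trm" where
  "scons W \<sigma> 0 = W"
| "scons W \<sigma> (Suc j) = \<sigma> j"

fun psubst :: "(nat \<Rightarrow> trm) \<Rightarrow> trm \<Rightarrow> trm" where
  "psubst \<sigma> (Var i) = \<sigma> i"
| "psubst \<sigma> Star = Star"
| "psubst \<sigma> (Lam M) = Lam (psubst (psubst_up \<sigma>) M)"
| "psubst \<sigma> (App M N) = App (psubst \<sigma> M) (psubst \<sigma> N)"
| "psubst \<sigma> (Par M N) = Par (psubst \<sigma> M) (psubst \<sigma> N)"

lemma psubst_up_Var: "psubst_up Var = Var"
proof
  fix i show "psubst_up Var i = Var i" by (cases i) auto
qed

lemma psubst_Var: "psubst Var M = M"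
  by (induction M) (auto simp: psubst_up_Var)

lemma lift_lift: "i \<le> k \<Longrightarrow> lift (Suc k) (lift i t) = lift i (lift k t)"
  by (induction t arbitrary: i k) auto

lemma subst_lift: "subst (lift k t) k s = t"
  by (induction t arbitrary: k s) auto

lemma funpow_lift_Var0: "(lift 0 ^^ k) (Var 0) = Var k"
  by (induction k) auto

lemma funpow_lift_lift: "(lift 0 ^^ k) (lift 0 t) = lift k ((lift 0 ^^ k) t)"
  by (induction k) (simp_all add: lift_lift)

lemma funpow_psubst_up:
  "(psubst_up ^^ k) \<tau> i = (if i < k then Var i else (lift 0 ^^ k) (\<tau> (i - k)))"
proof (induction k arbitrary: i)
  case 0
  then show ?case by simp
next
  case (Suc k)
  then show ?case by (cases i) auto
qed

text \<open>Generalised to substitution under \<open>k\<close> binders, so that the induction passes through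
  \<open>Lam\<close>.\<close>

lemma subst_psubst_up_funpow:
  "subst (psubst ((psubst_up ^^ k) (psubst_up \<sigma>)) M) k ((lift 0 ^^ k) W)
     = psubst ((psubst_up ^^ k) (scons W \<sigma>)) M"
proof (induction M arbitrary: k)
  case (Var i)
  consider "i < k" | "i = k" | j where "i - k = Suc j" "k < i"
    by (metis Suc_diff_Suc linorder_neqE_nat)
  then show ?case
    by cases (simp_all add: funpow_psubst_up funpow_lift_Var0 funpow_lift_lift subst_lift)
next
  case (Lam M)
  then show ?case using Lam.IH[of "Suc k"] by simp
qed auto

lemma subst_psubst_up: "subst (psubst (psubst_up \<sigma>) M) 0 W = psubst (scons W \<sigma>) M"
  using subst_psubst_up_funpow[of 0 \<sigma> M W] by simp

definition reducible_env :: "vty list \<Rightarrow> (nat \<Rightarrow> trm) \<Rightarrow> bool" where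
  "reducible_env \<Gamma> \<sigma> \<longleftrightarrow> (\<forall>i<length \<Gamma>. is_val (\<sigma> i) \<and> reducible_val (\<Gamma> ! i) (\<sigma> i))"

lemma reducible_env_scons:
  "reducible_env \<Gamma> \<sigma> \<Longrightarrow> is_val W \<Longrightarrow> reducible_val A W \<Longrightarrow> reducible_env (A # \<Gamma>) (scons W \<sigma>)"
  by (auto simp: reducible_env_def less_Suc_eq_0_disj)

lemma reducible_env_Var: "reducible_env \<Gamma> Var"
  by (simp add: reducible_env_def reducible_val_Var)

lemma red_App_Lam_val: "red (App (Lam M) W) X \<Longrightarrow> is_val W \<Longrightarrow> X = subst M 0 W"
  by (erule red.cases) (auto dest: val_irreducible)

lemma reducible_val_Lam:
  assumes "\<And>W. is_val W \<Longrightarrow> reducible_val A W \<Longrightarrow> reducible \<alpha> (subst M 0 W)"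
  shows "reducible_val (Arr A \<alpha>) (Lam M)"
proof -
  have "reducible \<alpha> (App (Lam M) W)" if "is_val W" "reducible_val A W" for W
    by (rule reducible_nonval) (use that assms red_App_Lam_val in auto)
  then show ?thesis by simp
qed

lemma reducible_psubst:
  "typing \<Gamma> M \<alpha> \<Longrightarrow> reducible_env \<Gamma> \<sigma> \<Longrightarrow> reducible \<alpha> (psubst \<sigma> M)"
proof (induction arbitrary: \<sigma> rule: typing.induct)
  case (t_var i \<Gamma> A)
  then have "is_val (\<sigma> i)" "reducible_val A (\<sigma> i)" by (auto simp: reducible_env_def)
  then show ?case by (simp only: psubst.simps reducible_val_iff)
next
  case (t_star \<Gamma>)
  then show ?case by (simp add: SN_val val_rtranclp_red)
next
  case (t_lam A \<Gamma> M \<alpha>)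
  have "reducible_val (Arr A \<alpha>) (Lam (psubst (psubst_up \<sigma>) M))"
    by (rule reducible_val_Lam)
      (use t_lam reducible_env_scons in \<open>simp add: subst_psubst_up\<close>)
  then show ?case by (simp add: reducible_val_iff del: reducible.simps reducible_val.simps)
next
  case (t_app \<Gamma> M A \<alpha> N)
  then show ?case unfolding psubst.simps by (blast intro: reducible_App)
next
  case (t_par \<Gamma> M N)
  then show ?case by (simp add: SN_Par)
qed

theorem proposition1:
  assumes "typing \<Gamma> M \<alpha>"
  shows "\<not> (\<exists>f. f 0 = M \<and> (\<forall>n. red (f n) (f (Suc n))))"
proof -
  have "reducible \<alpha> (psubst Var M)"
    using assms reducible_env_Var by (rule reducible_psubst)
  then have "SN M" by (simp add: reducible_SN psubst_Var)
  then show ?thesis by (rule SN_no_infinite_red)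
qed

end
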